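(* Let $S$ be a left Fountain-Gould order in an inverse semigroup $Q$. Then $S$ is a straight left I-order in $Q$.
   Context: For $a$ in a semigroup $Q$ lying in a subgroup of $Q$, $a^{\sharp}$ denotes its inverse in the maximal subgroup containing it; in an inverse semigroup $a^{-1}$ denotes the unique inverse of $a$. An element $a$ of a semigroup $S$ is square-cancellable if $a\,\mathcal{H}^*\,a^2$, i.e. for all $x,y\in S^1$, $xa=ya\Leftrightarrow xa^2=ya^2$ and $ax=ay\Leftrightarrow a^2x=a^2y$. A subsemigroup $S$ of a semigroup $Q$ is a left Fountain-Gould order in $Q$ if every $q\in Q$ can be written $q=a^{\sharp}b$ with $a,b\in S$ and $a$ lying in a subgroup of $Q$, and every square-cancellable element of $S$ lies in a subgroup of $Q$. A subsemigroup $S$ of an inverse semigroup $Q$ is a straight left I-order in $Q$ if every $q\in Q$ can be written $q=a^{-1}b$ with $a,b\in S$ and $a\,\mathcal{R}\,b$ in $Q$. *)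

theory Defs
  imports Main
begin

text \<open>The ambient semigroup Q is the whole type 'a (class semigroup_mult).
  Subsemigroups are subsets closed under multiplication.\<close>

definition subsemigroup :: "'a::semigroup_mult set \<Rightarrow> bool" where
  "subsemigroup S \<longleftrightarrow> (\<forall>x\<in>S. \<forall>y\<in>S. x * y \<in> S)"

definition subgroup_with_identity :: "'a::semigroup_mult set \<Rightarrow> 'a \<Rightarrow> bool" where
  "subgroup_with_identity G e \<longleftrightarrow>
     e \<in> G \<and> subsemigroup G \<and> (\<forall>x\<in>G. e * x = x \<and> x * e = x) \<and>
     (\<forall>x\<in>G. \<exists>y\<in>G. x * y = e \<and> y * x = e)"

definition is_subgroup :: "'a::semigroup_mult set \<Rightarrow> bool" where
  "is_subgroup G \<longleftrightarrow> (\<exists>e. subgroup_with_identity G e)"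

definition in_subgroup :: "'a::semigroup_mult \<Rightarrow> bool" where
  "in_subgroup a \<longleftrightarrow> (\<exists>G. is_subgroup G \<and> a \<in> G)"

text \<open>a^sharp: the group inverse of a (its inverse in a subgroup containing a;
  this coincides with its inverse in the maximal subgroup containing a).\<close>
definition sharp :: "'a::semigroup_mult \<Rightarrow> 'a" where
  "sharp a = (THE b. \<exists>G e. subgroup_with_identity G e \<and> a \<in> G \<and> b \<in> G \<and> a * b = e \<and> b * a = e)"

definition inverse_semigroup :: "'a::semigroup_mult itself \<Rightarrow> bool" where
  "inverse_semigroup _ \<longleftrightarrow> (\<forall>a::'a. \<exists>!b. a * b * a = a \<and> b * a * b = b)"

definition sinv :: "'a::semigroup_mult \<Rightarrow> 'a" where
  "sinv a = (THE b. a * b * a = a \<and> b * a * b = b)"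

text \<open>Multiplication by elements of S^1, with None standing for the adjoined identity.\<close>
fun lmult :: "'a::semigroup_mult option \<Rightarrow> 'a \<Rightarrow> 'a" where
  "lmult None a = a"
| "lmult (Some x) a = x * a"

fun rmult :: "'a::semigroup_mult \<Rightarrow> 'a option \<Rightarrow> 'a" where
  "rmult a None = a"
| "rmult a (Some x) = a * x"

definition one_adj :: "'a set \<Rightarrow> 'a option set" where
  "one_adj S = insert None (Some ` S)"

text \<open>a is square-cancellable in S: a H* a^2 in S.\<close>
definition square_cancellable :: "'a::semigroup_mult set \<Rightarrow> 'a \<Rightarrow> bool" where
  "square_cancellable S a \<longleftrightarrow>
     (\<forall>x\<in>one_adj S. \<forall>y\<in>one_adj S.
        (lmult x a = lmult y a \<longleftrightarrow> lmult x (a * a) = lmult y (a * a)) \<and>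
        (rmult a x = rmult a y \<longleftrightarrow> rmult (a * a) x = rmult (a * a) y))"

definition left_FG_order :: "'a::semigroup_mult set \<Rightarrow> bool" where
  "left_FG_order S \<longleftrightarrow> subsemigroup S \<and>
     (\<forall>q::'a. \<exists>a\<in>S. \<exists>b\<in>S. in_subgroup a \<and> q = sharp a * b) \<and>
     (\<forall>a\<in>S. square_cancellable S a \<longrightarrow> in_subgroup a)"

definition greenR :: "'a::semigroup_mult \<Rightarrow> 'a \<Rightarrow> bool" where
  "greenR a b \<longleftrightarrow> (\<exists>x. a = rmult b x) \<and> (\<exists>y. b = rmult a y)"

definition straight_left_I_order :: "'a::semigroup_mult set \<Rightarrow> bool" where
  "straight_left_I_order S \<longleftrightarrow> subsemigroup S \<and>
     (\<forall>q::'a. \<exists>a\<in>S. \<exists>b\<in>S. q = sinv a * b \<and> greenR a b)"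

end

theory Submission
  imports Defs
begin

text \<open>Write q = a\<inverse> b with a, b \<in> S and a in a subgroup, so that a a\<inverse> = a\<inverse> a, and similarly
  (ab)\<inverse> = u\<inverse> v with u, v \<in> S and u in a subgroup. Then c = uvaa \<in> S satisfies cq = uvab \<in> S
  and c\<inverse>c = a\<inverse>a\<inverse>(ab)(ab)\<inverse>aa = qq\<inverse>, and whenever c\<inverse>c = qq\<inverse> we get q = c\<inverse>(cq)
  and c \<R> cq.\<close>

context
  assumes inverse_semigroup: "inverse_semigroup TYPE('a::semigroup_mult)"
begin

lemma sinv_inverse:
  fixes a :: 'a
  shows "a * sinv a * a = a" and "sinv a * a * sinv a = sinv a"
proof -
  have "\<exists>!b. a * b * a = a \<and> b * a * b = b"
    using inverse_semigroup unfolding inverse_semigroup_def by blast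
  then have "a * sinv a * a = a \<and> sinv a * a * sinv a = sinv a"
    unfolding sinv_def by (rule theI')
  then show "a * sinv a * a = a" and "sinv a * a * sinv a = sinv a" by auto
qed

lemma sinv_absorb [simp]:
  fixes a y :: 'a
  shows "a * (sinv a * a) = a" and "a * (sinv a * (a * y)) = a * y"
    and "sinv a * (a * sinv a) = sinv a" and "sinv a * (a * (sinv a * y)) = sinv a * y"
  using sinv_inverse[of a] by (metis mult.assoc)+

lemma sinv_eqI:
  fixes a b :: 'a
  assumes "a * b * a = a" and "b * a * b = b"
  shows "sinv a = b"
proof -
  have "\<exists>!b. a * b * a = a \<and> b * a * b = b"
    using inverse_semigroup unfolding inverse_semigroup_def by blast
  then show ?thesis
    unfolding sinv_def using assms by (blast intro: the1_equality)
qed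

lemma sinv_sinv [simp]: "sinv (sinv a) = (a :: 'a)"
  by (rule sinv_eqI) (simp_all add: sinv_inverse)

lemma sinv_idempotent: "(e :: 'a) * e = e \<Longrightarrow> sinv e = e"
  by (rule sinv_eqI) simp_all

text \<open>The inverse x of ef is fxe again, hence idempotent, and ef = sinv x = x.\<close>
lemma idempotent_mult:
  fixes e f :: 'a
  assumes e: "e * e = e" and f: "f * f = f"
  shows "e * f * (e * f) = e * f"
proof -
  define x where "x = sinv (e * f)"
  have x1: "e * f * x * (e * f) = e * f" and x2: "x * (e * f) * x = x"
    unfolding x_def by (fact sinv_inverse)+
  have "sinv (e * f) = f * x * e"
    by (rule sinv_eqI) (use x1 x2 e f in \<open>metis mult.assoc\<close>)+
  then have x_eq: "x = f * x * e" unfolding x_def .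
  have "x * x = f * (x * (e * f) * x) * e"
    using x_eq by (metis mult.assoc)
  also have "\<dots> = x" using x2 x_eq by simp
  finally have "x * x = x" .
  moreover have "e * f = sinv x" unfolding x_def by simp
  ultimately show ?thesis using sinv_idempotent by simp
qed

lemma idempotents_commute:
  fixes e f :: 'a
  assumes e: "e * e = e" and f: "f * f = f"
  shows "e * f = f * e"
proof -
  have ef: "e * f * (e * f) = e * f" and fe: "f * e * (f * e) = f * e"
    using idempotent_mult e f by blast+
  have "sinv (e * f) = f * e"
    by (rule sinv_eqI) (use ef fe e f in \<open>metis mult.assoc\<close>)+
  moreover have "sinv (e * f) = e * f" using sinv_idempotent ef .
  ultimately show ?thesis by simp
qed

lemma sinv_mult: "sinv ((x :: 'a) * y) = sinv y * sinv x"
proof (rule sinv_eqI)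
  have "(sinv x * x) * (y * sinv y) = (y * sinv y) * (sinv x * x)"
    by (rule idempotents_commute) (simp_all add: mult.assoc)
  then have comm: "y * (sinv y * (sinv x * (x * z))) = sinv x * (x * (y * (sinv y * z)))" for z
    by (metis mult.assoc)
  show "x * y * (sinv y * sinv x) * (x * y) = x * y"
    by (simp add: mult.assoc comm)
  show "sinv y * sinv x * (x * y) * (sinv y * sinv x) = sinv y * sinv x"
    by (simp add: mult.assoc comm[symmetric])
qed

lemma sinv_eq_group_inverse:
  fixes a b e :: 'a
  assumes "subgroup_with_identity G e" "a \<in> G" "b \<in> G" "a * b = e" "b * a = e"
  shows "sinv a = b"
proof (rule sinv_eqI)
  have "e * a = a" "e * b = b"
    using assms unfolding subgroup_with_identity_def by auto
  with assms(4,5) show "a * b * a = a" "b * a * b = b" by simp_all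
qed

lemma sharp_eq_sinv:
  fixes a :: 'a
  assumes "in_subgroup a"
  shows "sharp a = sinv a"
proof -
  obtain G e b where "subgroup_with_identity G e" "a \<in> G" "b \<in> G" "a * b = e" "b * a = e"
    using assms unfolding in_subgroup_def is_subgroup_def subgroup_with_identity_def by blast
  moreover from this have "sinv a = b" by (rule sinv_eq_group_inverse)
  ultimately show ?thesis
    unfolding sharp_def by (blast intro: sinv_eq_group_inverse[symmetric])
qed

lemma in_subgroup_sinv_commute:
  fixes a :: 'a
  assumes "in_subgroup a"
  shows "a * sinv a = sinv a * a"
proof -
  obtain G e b where "subgroup_with_identity G e" "a \<in> G" "b \<in> G" "a * b = e" "b * a = e"
    using assms unfolding in_subgroup_def is_subgroup_def subgroup_with_identity_def by blast
  moreover from this have "sinv a = b" by (rule sinv_eq_group_inverse)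
  ultimately show ?thesis by simp
qed

lemma sinv_mult_self_of_mult: "sinv ((x :: 'a) * y) * (x * y) = sinv y * (sinv x * x) * y"
  by (simp add: sinv_mult mult.assoc)

lemma sinv_left_mult_cancel:
  fixes c q :: 'a
  assumes "sinv c * c = q * sinv q"
  shows "sinv c * (c * q) = q"
  by (metis assms sinv_inverse(1) mult.assoc)

lemma greenR_mult_right:
  fixes c q :: 'a
  assumes "sinv c * c = q * sinv q"
  shows "greenR c (c * q)"
proof -
  have "c * q * sinv (c * q) = c * (q * sinv q) * sinv c"
    by (simp add: sinv_mult mult.assoc)
  also have "\<dots> = c * sinv c"
    by (simp add: mult.assoc flip: assms)
  finally have "c * q * sinv (c * q) = c * sinv c" .
  then have "c = rmult (c * q) (Some (sinv (c * q) * c))"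
    by (metis rmult.simps(2) sinv_inverse(1) mult.assoc)
  then show ?thesis
    unfolding greenR_def by (metis rmult.simps(2))
qed

lemma exists_left_multiplier_matching_range:
  fixes S :: "'a set" and q :: 'a
  assumes S: "subsemigroup S"
    and quotients: "\<forall>q. \<exists>a\<in>S. \<exists>b\<in>S. in_subgroup a \<and> q = sharp a * b"
  shows "\<exists>c\<in>S. c * q \<in> S \<and> sinv c * c = q * sinv q"
proof -
  obtain a b where "a \<in> S" "b \<in> S" and a: "in_subgroup a" and q: "q = sinv a * b"
    using quotients sharp_eq_sinv by metis
  have "a * b \<in> S" using S \<open>a \<in> S\<close> \<open>b \<in> S\<close> unfolding subsemigroup_def by blast
  then obtain u v where "u \<in> S" "v \<in> S" and u: "in_subgroup u" and uv: "sinv (a * b) = sinv u * v"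
    using quotients sharp_eq_sinv by metis
  define c where "c = u * (v * (a * a))"
  have a_absorb: "a * (a * (sinv a * z)) = a * z" "sinv a * (sinv a * (a * z)) = sinv a * z"
    "sinv a * (a * a) = a" for z
    using in_subgroup_sinv_commute[OF a] sinv_inverse[of a] by (metis mult.assoc)+
  have "c * q = u * (v * (a * b))"
    unfolding c_def q by (simp add: mult.assoc a_absorb)
  then have "c \<in> S \<and> c * q \<in> S"
    using S \<open>a \<in> S\<close> \<open>b \<in> S\<close> \<open>u \<in> S\<close> \<open>v \<in> S\<close> unfolding subsemigroup_def c_def by simp
  moreover have "sinv c * c = q * sinv q"
  proof -
    have "sinv (u * v) * (u * v) = sinv v * (u * sinv u) * v"
      using sinv_mult_self_of_mult in_subgroup_sinv_commute[OF u] by simp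
    also have "\<dots> = sinv (sinv u * v) * (sinv u * v)"
      by (simp add: sinv_mult_self_of_mult)
    also have "\<dots> = a * b * sinv (a * b)"
      unfolding uv[symmetric] by simp
    finally have uv_range: "sinv (u * v) * (u * v) = a * (b * (sinv b * sinv a))"
      by (simp add: sinv_mult mult.assoc)
    have "sinv c * c = sinv a * (sinv a * (sinv (u * v) * (u * v))) * a * a"
      unfolding c_def by (simp add: sinv_mult mult.assoc)
    also have "\<dots> = sinv a * (b * (sinv b * a))"
      unfolding uv_range by (simp add: mult.assoc a_absorb)
    also have "\<dots> = q * sinv q"
      unfolding q by (simp add: sinv_mult mult.assoc)
    finally show ?thesis .
  qed
  ultimately show ?thesis by blast
qed

end

theorem lemma2p2:
  fixes S :: "'a::semigroup_mult set"
  assumes "inverse_semigroup TYPE('a)"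
    and "left_FG_order S"
  shows "straight_left_I_order S"
  unfolding straight_left_I_order_def
proof (intro conjI allI)
  show S: "subsemigroup S"
    using assms(2) unfolding left_FG_order_def by blast
  fix q :: 'a
  obtain c where "c \<in> S" "c * q \<in> S" and c_range: "sinv c * c = q * sinv q"
    using exists_left_multiplier_matching_range[OF assms(1) S] assms(2)
    unfolding left_FG_order_def by blast
  then show "\<exists>a\<in>S. \<exists>b\<in>S. q = sinv a * b \<and> greenR a b"
    using sinv_left_mult_cancel[OF assms(1) c_range] greenR_mult_right[OF assms(1) c_range] by metis
qed

end
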